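(* Let $(a_n)_{n\in\mathbb{N}}$ be a sequence of real numbers with $a_1>a_2>\cdots>a_n>a_{n+1}>\cdots\ge 0$, and let $\alpha\ge0$ be its limit. Consider the statements: (i) $\alpha=0$; (ii) for every integer $k\ge0$ and every $\varepsilon>0$ there exists $\delta>0$ such that for all $n\in\mathbb{N}$, $a_n<\varepsilon+\delta$ implies $a_{n+k}\le\varepsilon$; (iii) for every integer $k\ge1$ and every $\varepsilon>0$ there exists $\delta>0$ such that for all $n\in\mathbb{N}$, $\frac{1}{2}(a_n+a_{n+1})<\varepsilon+\delta$ implies $a_{n+k}\le\varepsilon$; (iv) for every $\varepsilon\in(0,\infty)\setminus\{a_k : k\in\mathbb{N}\}$ there exists $\delta>0$ such that for all $m,n\in\mathbb{N}$, $a_m+a_n<\varepsilon+\delta$ implies $a_m+a_n\le\varepsilon$; (v) for every $\varepsilon>0$ there exists $\delta>0$ such that for all $m,n\in\mathbb{N}$, $a_m+a_n<\varepsilon+\delta$ implies $a_m+a_n\le\varepsilon$. Then (i), (ii), (iii), (iv) are equivalent; moreover (v) implies (i), but (i) does not imply (v).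
   Context: $\mathbb{N}=\{1,2,3,\dots\}$. *)

theory Defs
  imports Complex_Main
begin

text \<open>Sequences are indexed by the positive naturals; the value at index 0 is ignored.\<close>

definition admissible_seq :: "(nat \<Rightarrow> real) \<Rightarrow> bool" where
  "admissible_seq a \<longleftrightarrow> (\<forall>n\<ge>1. a (n + 1) < a n) \<and> (\<forall>n\<ge>1. 0 \<le> a n)"

definition cond_ii :: "(nat \<Rightarrow> real) \<Rightarrow> bool" where
  "cond_ii a \<longleftrightarrow> (\<forall>(k::nat) (\<epsilon>::real). \<epsilon> > 0 \<longrightarrow>
     (\<exists>\<delta>>0. \<forall>n\<ge>1. a n < \<epsilon> + \<delta> \<longrightarrow> a (n + k) \<le> \<epsilon>))"

definition cond_iii :: "(nat \<Rightarrow> real) \<Rightarrow> bool" where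
  "cond_iii a \<longleftrightarrow> (\<forall>(k::nat) (\<epsilon>::real). k \<ge> 1 \<longrightarrow> \<epsilon> > 0 \<longrightarrow>
     (\<exists>\<delta>>0. \<forall>n\<ge>1. (a n + a (n + 1)) / 2 < \<epsilon> + \<delta> \<longrightarrow> a (n + k) \<le> \<epsilon>))"

definition cond_iv :: "(nat \<Rightarrow> real) \<Rightarrow> bool" where
  "cond_iv a \<longleftrightarrow> (\<forall>\<epsilon>::real. \<epsilon> > 0 \<longrightarrow> \<epsilon> \<notin> {a k | k. k \<ge> 1} \<longrightarrow>
     (\<exists>\<delta>>0. \<forall>m\<ge>1. \<forall>n\<ge>1. a m + a n < \<epsilon> + \<delta> \<longrightarrow> a m + a n \<le> \<epsilon>))"

definition cond_v :: "(nat \<Rightarrow> real) \<Rightarrow> bool" where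
  "cond_v a \<longleftrightarrow> (\<forall>\<epsilon>::real. \<epsilon> > 0 \<longrightarrow>
     (\<exists>\<delta>>0. \<forall>m\<ge>1. \<forall>n\<ge>1. a m + a n < \<epsilon> + \<delta> \<longrightarrow> a m + a n \<le> \<epsilon>))"

end

theory Submission
  imports Defs "HOL-Analysis.Elementary_Metric_Spaces"
begin

text \<open>If only finitely many values of a real function exceed \<open>\<epsilon>\<close>, they stay a positive
  distance above \<open>\<epsilon>\<close>; this gap is the \<open>\<delta>\<close> of conditions (ii)--(iv). For \<open>\<alpha> = 0\<close> only
  finitely many terms exceed a given \<open>\<epsilon> > 0\<close>, which gives (ii) and (iii) at once. For (iv) the
  sums \<open>a m + a n\<close> with a large index lie near some \<open>a m\<close>, hence (as \<open>\<epsilon>\<close> is not a term) a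
  positive distance away from \<open>\<epsilon>\<close>, and the remaining finitely many sums have a gap above \<open>\<epsilon>\<close>.
  Conversely, if \<open>\<alpha> > 0\<close> then the terms approach \<open>\<alpha>\<close> strictly from above, so (ii) and (iii)
  fail at \<open>\<epsilon> = \<alpha>\<close> and (iv) fails at \<open>\<epsilon> = a 1 + \<alpha>\<close>. The sequence \<open>1/n\<close> violates (v) at
  \<open>\<epsilon> = 1\<close>, since \<open>1 + 1/n\<close> approaches 1 from above.\<close>

lemma finite_exceeding_imp_gap_above:
  fixes f :: "'a \<Rightarrow> real"
  assumes "finite {x\<in>A. \<epsilon> < f x}"
  shows "\<exists>\<delta>>0. \<forall>x\<in>A. f x < \<epsilon> + \<delta> \<longrightarrow> f x \<le> \<epsilon>"
proof -
  obtain \<delta> where "\<delta> > 0" and \<delta>: "\<forall>y\<in>f ` {x\<in>A. \<epsilon> < f x}. y \<noteq> \<epsilon> \<longrightarrow> \<delta> \<le> dist \<epsilon> y"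
    using finite_set_avoid[OF finite_imageI[OF assms]] by blast
  have "f x \<le> \<epsilon>" if "x \<in> A" "f x < \<epsilon> + \<delta>" for x
    using \<delta> that by (force simp: dist_real_def)
  with \<open>\<delta> > 0\<close> show ?thesis by blast
qed

lemma finite_exceeding_imp_avoid:
  fixes f :: "'a \<Rightarrow> real"
  assumes "finite {x\<in>A. c < f x}" and "c < \<epsilon>" and "\<epsilon> \<notin> f ` A"
  shows "\<exists>\<eta>>0. \<forall>x\<in>A. \<eta> \<le> \<bar>f x - \<epsilon>\<bar>"
proof -
  obtain d where "d > 0" and d: "\<forall>y\<in>f ` {x\<in>A. c < f x}. y \<noteq> \<epsilon> \<longrightarrow> d \<le> dist \<epsilon> y"
    using finite_set_avoid[OF finite_imageI[OF assms(1)]] by blast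
  have "min d (\<epsilon> - c) \<le> \<bar>f x - \<epsilon>\<bar>" if "x \<in> A" for x
  proof (cases "c < f x")
    case True
    with d that assms(3) show ?thesis by (force simp: dist_real_def)
  qed simp
  with \<open>d > 0\<close> assms(2) show ?thesis by (intro exI[of _ "min d (\<epsilon> - c)"]) auto
qed

lemma tendsto_finite_exceeding:
  fixes a :: "nat \<Rightarrow> real"
  assumes "a \<longlonglongrightarrow> \<alpha>" and "\<alpha> < c"
  shows "finite {n\<in>A. c < a n}"
proof -
  have "eventually (\<lambda>n. a n < c) cofinite"
    using order_tendstoD(2)[OF assms] by (simp add: cofinite_eq_sequentially)
  then have "finite {n. \<not> a n < c}" by (simp add: eventually_cofinite)
  then show ?thesis by (rule finite_subset[rotated]) auto
qed

lemma tendsto_exists_below: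
  fixes a :: "nat \<Rightarrow> real"
  assumes "a \<longlonglongrightarrow> \<alpha>" and "\<alpha> < c"
  shows "\<exists>n\<ge>1. a n < c"
proof -
  obtain N where "\<forall>n\<ge>N. a n < c"
    using order_tendstoD(2)[OF assms] by (auto simp: eventually_sequentially)
  then show ?thesis by (intro exI[of _ "max N 1"]) auto
qed

lemma admissible_seq_nonneg: "admissible_seq a \<Longrightarrow> 1 \<le> n \<Longrightarrow> 0 \<le> a n"
  unfolding admissible_seq_def by auto

lemma admissible_seq_less:
  assumes "admissible_seq a" and "1 \<le> n" and "n < m"
  shows "a m < a n"
  using \<open>n < m\<close>[folded Suc_le_eq]
proof (induction m rule: dec_induct)
  case base
  from assms show ?case by (simp add: admissible_seq_def)
next
  case (step k)
  with assms have "a (Suc k) < a k" by (simp add: admissible_seq_def)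
  with step.IH show ?case by simp
qed

lemma admissible_seq_le:
  assumes "admissible_seq a" and "1 \<le> n" and "n \<le> m"
  shows "a m \<le> a n"
  using admissible_seq_less[OF assms(1,2)] assms(3) by (cases "n = m") (auto intro: less_imp_le)

lemma admissible_seq_limit_nonneg:
  assumes "admissible_seq a" and "a \<longlonglongrightarrow> \<alpha>"
  shows "0 \<le> \<alpha>"
  using assms(2) by (rule LIMSEQ_le_const) (use admissible_seq_nonneg[OF assms(1)] in auto)

lemma admissible_seq_limit_less:
  assumes "admissible_seq a" and "a \<longlonglongrightarrow> \<alpha>" and "1 \<le> n"
  shows "\<alpha> < a n"
proof -
  have "\<alpha> \<le> a (n + 1)"
    using assms(2) by (rule LIMSEQ_le_const2)
      (use admissible_seq_le[OF assms(1)] assms(3) in \<open>auto intro: exI[of _ "n + 1"]\<close>)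
  also have "a (n + 1) < a n"
    using admissible_seq_less[OF assms(1,3)] by simp
  finally show ?thesis .
qed

lemma zero_imp_cond_ii:
  assumes adm: "admissible_seq a" and lim: "a \<longlonglongrightarrow> 0"
  shows "cond_ii a"
  unfolding cond_ii_def
proof (intro allI impI)
  fix k :: nat and \<epsilon> :: real
  assume "\<epsilon> > 0"
  then obtain \<delta> where "\<delta> > 0" and \<delta>: "\<forall>n\<in>UNIV. a n < \<epsilon> + \<delta> \<longrightarrow> a n \<le> \<epsilon>"
    using finite_exceeding_imp_gap_above tendsto_finite_exceeding[OF lim] by blast
  have "a (n + k) \<le> \<epsilon>" if "n \<ge> 1" "a n < \<epsilon> + \<delta>" for n
    using \<delta> admissible_seq_le[OF adm, of n "n + k"] that by fastforce
  with \<open>\<delta> > 0\<close> show "\<exists>\<delta>>0. \<forall>n\<ge>1. a n < \<epsilon> + \<delta> \<longrightarrow> a (n + k) \<le> \<epsilon>" by blast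
qed

lemma zero_imp_cond_iii:
  assumes adm: "admissible_seq a" and lim: "a \<longlonglongrightarrow> 0"
  shows "cond_iii a"
  unfolding cond_iii_def
proof (intro allI impI)
  fix k :: nat and \<epsilon> :: real
  assume "k \<ge> 1" "\<epsilon> > 0"
  then obtain \<delta> where "\<delta> > 0" and \<delta>: "\<forall>n\<in>UNIV. a n < \<epsilon> + \<delta> \<longrightarrow> a n \<le> \<epsilon>"
    using finite_exceeding_imp_gap_above tendsto_finite_exceeding[OF lim] by blast
  have "a (n + k) \<le> \<epsilon>" if n: "n \<ge> 1" and mean: "(a n + a (n + 1)) / 2 < \<epsilon> + \<delta>" for n
  proof -
    have "a (n + 1) < a n" using admissible_seq_less[OF adm n] by simp
    with mean \<delta> have "a (n + 1) \<le> \<epsilon>" by auto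
    moreover have "a (n + k) \<le> a (n + 1)"
      using admissible_seq_le[OF adm, of "n + 1" "n + k"] \<open>k \<ge> 1\<close> by simp
    ultimately show ?thesis by simp
  qed
  with \<open>\<delta> > 0\<close> show "\<exists>\<delta>>0. \<forall>n\<ge>1. (a n + a (n + 1)) / 2 < \<epsilon> + \<delta> \<longrightarrow> a (n + k) \<le> \<epsilon>"
    by blast
qed

lemma zero_imp_cond_iv:
  assumes adm: "admissible_seq a" and lim: "a \<longlonglongrightarrow> 0"
  shows "cond_iv a"
  unfolding cond_iv_def
proof (intro allI impI)
  fix \<epsilon> :: real
  assume "\<epsilon> > 0" and "\<epsilon> \<notin> {a k |k. 1 \<le> k}"
  then obtain \<eta> where "\<eta> > 0" and far: "\<forall>m\<in>{1..}. \<eta> \<le> \<bar>a m - \<epsilon>\<bar>"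
    using finite_exceeding_imp_avoid[of "{1..}" "\<epsilon> / 2" a \<epsilon>]
      tendsto_finite_exceeding[OF lim, of "\<epsilon> / 2"] by fastforce
  obtain K where K: "\<forall>n\<ge>K. a n < \<eta>"
    using order_tendstoD(2)[OF lim \<open>\<eta> > 0\<close>] by (auto simp: eventually_sequentially)
  have second_index_small: "n < K"
    if "m \<ge> 1" "n \<ge> 1" "\<epsilon> < a m + a n" "a m + a n < \<epsilon> + \<eta>" for m n
  proof (rule ccontr)
    assume "\<not> n < K"
    with K have "a n < \<eta>" by simp
    with that admissible_seq_nonneg[OF adm, of n] have "\<bar>a m - \<epsilon>\<bar> < \<eta>" by auto
    with far that show False by (simp add: not_le[symmetric])
  qed
  define pairs where "pairs = {1..<K} \<times> {1..<K}"
  obtain \<delta> where "\<delta> > 0"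
    and \<delta>: "\<forall>(m, n)\<in>pairs. a m + a n < \<epsilon> + \<delta> \<longrightarrow> a m + a n \<le> \<epsilon>"
    using finite_exceeding_imp_gap_above[of pairs \<epsilon> "\<lambda>(m, n). a m + a n"]
    by (auto simp: pairs_def)
  have "a m + a n \<le> \<epsilon>"
    if "m \<ge> 1" "n \<ge> 1" "a m + a n < \<epsilon> + min \<delta> \<eta>" for m n
  proof (rule ccontr)
    assume "\<not> a m + a n \<le> \<epsilon>"
    with that second_index_small[of m n] second_index_small[of n m] have "(m, n) \<in> pairs"
      by (auto simp: pairs_def add.commute)
    with \<delta> that \<open>\<not> a m + a n \<le> \<epsilon>\<close> show False by auto
  qed
  with \<open>\<delta> > 0\<close> \<open>\<eta> > 0\<close>
  show "\<exists>\<delta>>0. \<forall>m\<ge>1. \<forall>n\<ge>1. a m + a n < \<epsilon> + \<delta> \<longrightarrow> a m + a n \<le> \<epsilon>"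
    by (intro exI[of _ "min \<delta> \<eta>"]) auto
qed

lemma cond_ii_imp_zero:
  assumes adm: "admissible_seq a" and lim: "a \<longlonglongrightarrow> \<alpha>" and "cond_ii a"
  shows "\<alpha> = 0"
proof (rule ccontr)
  assume "\<alpha> \<noteq> 0"
  with admissible_seq_limit_nonneg[OF adm lim] have "\<alpha> > 0" by simp
  with \<open>cond_ii a\<close> obtain \<delta> where "\<delta> > 0" and \<delta>: "\<forall>n\<ge>1. a n < \<alpha> + \<delta> \<longrightarrow> a (n + 1) \<le> \<alpha>"
    unfolding cond_ii_def by blast
  obtain n where "n \<ge> 1" "a n < \<alpha> + \<delta>"
    using tendsto_exists_below[OF lim, of "\<alpha> + \<delta>"] \<open>\<delta> > 0\<close> by auto
  with \<delta> admissible_seq_limit_less[OF adm lim, of "n + 1"] show False by auto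
qed

lemma cond_iii_imp_zero:
  assumes adm: "admissible_seq a" and lim: "a \<longlonglongrightarrow> \<alpha>" and "cond_iii a"
  shows "\<alpha> = 0"
proof (rule ccontr)
  assume "\<alpha> \<noteq> 0"
  with admissible_seq_limit_nonneg[OF adm lim] have "\<alpha> > 0" by simp
  with \<open>cond_iii a\<close> obtain \<delta> where "\<delta> > 0"
    and \<delta>: "\<forall>n\<ge>1. (a n + a (n + 1)) / 2 < \<alpha> + \<delta> \<longrightarrow> a (n + 1) \<le> \<alpha>"
    unfolding cond_iii_def by blast
  obtain n where n: "n \<ge> 1" "a n < \<alpha> + \<delta>"
    using tendsto_exists_below[OF lim, of "\<alpha> + \<delta>"] \<open>\<delta> > 0\<close> by auto
  moreover have "a (n + 1) < a n" using admissible_seq_less[OF adm n(1)] by simp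
  ultimately show False
    using \<delta> admissible_seq_limit_less[OF adm lim, of "n + 1"] by auto
qed

lemma cond_iv_imp_zero:
  assumes adm: "admissible_seq a" and lim: "a \<longlonglongrightarrow> \<alpha>" and "cond_iv a"
  shows "\<alpha> = 0"
proof (rule ccontr)
  assume "\<alpha> \<noteq> 0"
  with admissible_seq_limit_nonneg[OF adm lim] have "\<alpha> > 0" by simp
  define \<epsilon> where "\<epsilon> = a 1 + \<alpha>"
  have "\<epsilon> > 0" using \<open>\<alpha> > 0\<close> admissible_seq_nonneg[OF adm, of 1] by (simp add: \<epsilon>_def)
  moreover have "\<epsilon> \<notin> {a k |k. 1 \<le> k}"
    using admissible_seq_le[OF adm, of 1] \<open>\<alpha> > 0\<close> by (force simp: \<epsilon>_def)
  ultimately obtain \<delta> where "\<delta> > 0"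
    and \<delta>: "\<forall>m\<ge>1. \<forall>n\<ge>1. a m + a n < \<epsilon> + \<delta> \<longrightarrow> a m + a n \<le> \<epsilon>"
    using \<open>cond_iv a\<close> unfolding cond_iv_def by blast
  obtain n where "n \<ge> 1" "a n < \<alpha> + \<delta>"
    using tendsto_exists_below[OF lim, of "\<alpha> + \<delta>"] \<open>\<delta> > 0\<close> by auto
  with \<delta>[rule_format, of 1 n] admissible_seq_limit_less[OF adm lim, of n] show False
    by (simp add: \<epsilon>_def)
qed

lemma cond_v_imp_cond_iv: "cond_v a \<Longrightarrow> cond_iv a"
  unfolding cond_v_def cond_iv_def by blast

lemma admissible_seq_inverse: "admissible_seq (\<lambda>n. 1 / real n)"
  unfolding admissible_seq_def by (auto simp: frac_less2)

lemma not_cond_v_inverse: "\<not> cond_v (\<lambda>n. 1 / real n)"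
proof
  assume "cond_v (\<lambda>n. 1 / real n)"
  then obtain \<delta> where "\<delta> > 0"
    and \<delta>: "\<forall>m\<ge>1. \<forall>n\<ge>1. 1 / real m + 1 / real n < 1 + \<delta> \<longrightarrow> 1 / real m + 1 / real n \<le> 1"
    unfolding cond_v_def by (meson zero_less_one)
  obtain n where "n \<ge> 1" "1 / real n < \<delta>"
    using tendsto_exists_below[OF lim_inverse_n' \<open>\<delta> > 0\<close>] by blast
  with \<delta>[rule_format, of 1 n] show False by simp
qed

theorem lemma5p1:
  shows "(\<forall>(a::nat \<Rightarrow> real) (\<alpha>::real). admissible_seq a \<longrightarrow> a \<longlonglongrightarrow> \<alpha> \<longrightarrow>
            ((\<alpha> = 0 \<longleftrightarrow> cond_ii a) \<and> (\<alpha> = 0 \<longleftrightarrow> cond_iii a) \<and> (\<alpha> = 0 \<longleftrightarrow> cond_iv a)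
             \<and> (cond_v a \<longrightarrow> \<alpha> = 0)))
         \<and> (\<exists>(a::nat \<Rightarrow> real). admissible_seq a \<and> a \<longlonglongrightarrow> 0 \<and> \<not> cond_v a)"
proof (intro conjI allI impI)
  fix a :: "nat \<Rightarrow> real" and \<alpha> :: real
  assume adm: "admissible_seq a" and lim: "a \<longlonglongrightarrow> \<alpha>"
  show "\<alpha> = 0 \<longleftrightarrow> cond_ii a"
    using zero_imp_cond_ii[OF adm] cond_ii_imp_zero[OF adm lim] lim by auto
  show "\<alpha> = 0 \<longleftrightarrow> cond_iii a"
    using zero_imp_cond_iii[OF adm] cond_iii_imp_zero[OF adm lim] lim by auto
  show "\<alpha> = 0 \<longleftrightarrow> cond_iv a"
    using zero_imp_cond_iv[OF adm] cond_iv_imp_zero[OF adm lim] lim by auto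
  show "cond_v a \<Longrightarrow> \<alpha> = 0"
    by (rule cond_iv_imp_zero[OF adm lim cond_v_imp_cond_iv])
next
  show "\<exists>a. admissible_seq a \<and> a \<longlonglongrightarrow> 0 \<and> \<not> cond_v a"
    using admissible_seq_inverse lim_inverse_n' not_cond_v_inverse by blast
qed

end
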